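(* Let $m,n\ge 2$ and let $RC(3,m,n)$ be the set of all real vectors $\{P(a,b,c|x,y,z)\}_{a,b,c\in\{1,\dots,n\},\,x,y,z\in\{1,\dots,m\}}$ satisfying $P(a,b,c|x,y,z)\ge 0$, $\sum_{a,b,c}P(a,b,c|x,y,z)=1$ for all $x,y,z$, and the relativistic causal constraints: (i) $\sum_a P(a,b,c|x,y,z)=\sum_a P(a,b,c|x',y,z)$ for all $x,x',y,z,b,c$; (ii) $\sum_c P(a,b,c|x,y,z)=\sum_c P(a,b,c|x,y,z')$ for all $z,z',x,y,a,b$; (iii) $\sum_{b,c} P(a,b,c|x,y,z)=\sum_{b,c} P(a,b,c|x,y',z')$ for all $y,y',z,z',x,a$; (iv) $\sum_{a,b} P(a,b,c|x,y,z)=\sum_{a,b} P(a,b,c|x',y',z)$ for all $x,x',y,y',z,c$. Then the dimension of the polytope $RC(3,m,n)$ (i.e. of its affine hull in $\mathbb{R}^{(mn)^3}$) equals $$[m(n-1)+1]^{3}+m^{2}(m-1)(n-1)^{2}-1.$$ *)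

theory Defs
  imports Complex_Main
begin

definition aff_independent :: "('i \<Rightarrow> real) list \<Rightarrow> bool" where
  "aff_independent ps \<longleftrightarrow>
     (\<forall>l::nat \<Rightarrow> real.
        (\<Sum>j<length ps. l j) = 0 \<and> (\<forall>i. (\<Sum>j<length ps. l j * (ps ! j) i) = 0)
        \<longrightarrow> (\<forall>j<length ps. l j = 0))"

definition affine_dimension :: "('i \<Rightarrow> real) set \<Rightarrow> int" where
  "affine_dimension S =
     (if S = {} then -1
      else int (GREATEST k. \<exists>ps. length ps = Suc k \<and> set ps \<subseteq> S \<and> aff_independent ps))"

type_synonym behaviour = "nat \<times> nat \<times> nat \<times> nat \<times> nat \<times> nat \<Rightarrow> real"

text \<open>P (a,b,c,x,y,z) stands for P(a,b,c|x,y,z); outcomes a,b,c range over {1..n},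
  inputs x,y,z over {1..m}.  Entries outside this index box are fixed to 0, so the set
  lives in a copy of R^((mn)^3).\<close>
definition RC3 :: "nat \<Rightarrow> nat \<Rightarrow> behaviour set" where
  "RC3 m n = {P.
     (\<forall>a b c x y z. \<not> (a \<in> {1..n} \<and> b \<in> {1..n} \<and> c \<in> {1..n} \<and> x \<in> {1..m} \<and> y \<in> {1..m} \<and> z \<in> {1..m})
        \<longrightarrow> P (a,b,c,x,y,z) = 0) \<and>
     (\<forall>a\<in>{1..n}. \<forall>b\<in>{1..n}. \<forall>c\<in>{1..n}. \<forall>x\<in>{1..m}. \<forall>y\<in>{1..m}. \<forall>z\<in>{1..m}.
        P (a,b,c,x,y,z) \<ge> 0) \<and>
     (\<forall>x\<in>{1..m}. \<forall>y\<in>{1..m}. \<forall>z\<in>{1..m}.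
        (\<Sum>a\<in>{1..n}. \<Sum>b\<in>{1..n}. \<Sum>c\<in>{1..n}. P (a,b,c,x,y,z)) = 1) \<and>
     (\<forall>x\<in>{1..m}. \<forall>x'\<in>{1..m}. \<forall>y\<in>{1..m}. \<forall>z\<in>{1..m}. \<forall>b\<in>{1..n}. \<forall>c\<in>{1..n}.
        (\<Sum>a\<in>{1..n}. P (a,b,c,x,y,z)) = (\<Sum>a\<in>{1..n}. P (a,b,c,x',y,z))) \<and>
     (\<forall>z\<in>{1..m}. \<forall>z'\<in>{1..m}. \<forall>x\<in>{1..m}. \<forall>y\<in>{1..m}. \<forall>a\<in>{1..n}. \<forall>b\<in>{1..n}.
        (\<Sum>c\<in>{1..n}. P (a,b,c,x,y,z)) = (\<Sum>c\<in>{1..n}. P (a,b,c,x,y,z'))) \<and>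
     (\<forall>y\<in>{1..m}. \<forall>y'\<in>{1..m}. \<forall>z\<in>{1..m}. \<forall>z'\<in>{1..m}. \<forall>x\<in>{1..m}. \<forall>a\<in>{1..n}.
        (\<Sum>b\<in>{1..n}. \<Sum>c\<in>{1..n}. P (a,b,c,x,y,z)) = (\<Sum>b\<in>{1..n}. \<Sum>c\<in>{1..n}. P (a,b,c,x,y',z'))) \<and>
     (\<forall>x\<in>{1..m}. \<forall>x'\<in>{1..m}. \<forall>y\<in>{1..m}. \<forall>y'\<in>{1..m}. \<forall>z\<in>{1..m}. \<forall>c\<in>{1..n}.
        (\<Sum>a\<in>{1..n}. \<Sum>b\<in>{1..n}. P (a,b,c,x,y,z)) = (\<Sum>a\<in>{1..n}. \<Sum>b\<in>{1..n}. P (a,b,c,x',y',z)))}"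

end

theory Submission
  imports Defs
begin

(*
  Work in coordinates adapted to the constraints. For one party, the vectors
  delta(a,x) - delta(n,x) with a < n, the deterministic vector "always output n", and
  delta(n,x) with x >= 2 form a basis of R^([n] x [m]) whose dual coordinates are P(a|x),
  sum_a P(a|1) and sum_a P(a|x) - sum_a P(a|1). Take the tensor-product basis of
  R^((mn)^3). Each of the constraints (i)-(iv), and the normalisation, forces some of the
  dual coordinates of a direction of RC(3,m,n) to vanish. The coordinates that survive
  are indexed by the triples of "reduced" pairs (a < n, or (n,1)) other than
  ((n,1),(n,1),(n,1)), and by the triples in which B has pair (n,y) with y >= 2 while A and
  C have outcomes below n. There are [m(n-1)+1]^3 - 1 + m^2(m-1)(n-1)^2 of them, which
  bounds the dimension from above. Conversely, the basis vectors with these indices are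
  themselves directions of the polytope, so small perturbations of the uniform behaviour
  along them give the required affinely independent points.
*)

section \<open>Counting affinely independent points\<close>

lemma extend_eliminated_solution:
  fixes f :: "'j \<Rightarrow> real"
  assumes "finite J" "j0 \<in> J" "f j0 \<noteq> 0"
    and solves: "\<And>g. g \<in> Q \<Longrightarrow> (\<Sum>j\<in>J - {j0}. l' j * (g j - g j0 / f j0 * f j)) = 0"
  shows "\<exists>l. (\<forall>j\<in>J - {j0}. l j = l' j) \<and> (\<forall>g\<in>insert f Q. (\<Sum>j\<in>J. l j * g j) = 0)"
proof -
  define S where "S = (\<Sum>j\<in>J - {j0}. l' j * f j)"
  define l where "l j = (if j = j0 then - S / f j0 else l' j)" for j
  have split: "(\<Sum>j\<in>J. l j * g j) = l j0 * g j0 + (\<Sum>j\<in>J - {j0}. l' j * g j)" for g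
    using sum.remove[OF assms(1,2), of "\<lambda>j. l j * g j"] by (simp add: l_def)
  have "(\<Sum>j\<in>J. l j * g j) = 0" if "g \<in> Q" for g
  proof -
    have "(\<Sum>j\<in>J - {j0}. l' j * g j) = g j0 / f j0 * S"
      using solves[OF that]
      by (simp add: S_def right_diff_distrib sum_subtractf sum_distrib_left mult_ac)
    then show ?thesis using split[of g] \<open>f j0 \<noteq> 0\<close> by (simp add: l_def field_simps)
  qed
  moreover have "(\<Sum>j\<in>J. l j * f j) = 0"
    using split[of f] \<open>f j0 \<noteq> 0\<close> by (simp add: l_def S_def)
  ultimately show ?thesis by (intro exI[of _ l]) (auto simp: l_def)
qed

lemma exists_nontrivial_solution:
  fixes Q :: "('j \<Rightarrow> real) set"
  assumes "finite Q" "finite J" "card Q < card J"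
  shows "\<exists>l. (\<exists>j\<in>J. l j \<noteq> 0) \<and> (\<forall>f\<in>Q. (\<Sum>j\<in>J. l j * f j) = 0)"
  using assms
proof (induction "card Q" arbitrary: Q J rule: less_induct)
  case less
  show ?case
  proof (cases "Q = {}")
    case True
    from less.prems obtain j where "j \<in> J" by fastforce
    with True show ?thesis by (intro exI[of _ "\<lambda>_. 1"]) auto
  next
    case False
    then obtain f where f: "f \<in> Q" by blast
    let ?Q = "Q - {f}"
    have card_Q: "card ?Q < card Q" using f less.prems(1) by (meson card_Diff1_less)
    show ?thesis
    proof (cases "\<forall>j\<in>J. f j = 0")
      case True
      have "finite ?Q" "card ?Q < card J" using less.prems card_Q by auto
      from less.hyps[OF card_Q this(1) less.prems(2) this(2)] obtain l
        where "\<exists>j\<in>J. l j \<noteq> 0" "\<forall>g\<in>?Q. (\<Sum>j\<in>J. l j * g j) = 0" by blast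
      with True show ?thesis by (intro exI[of _ l]) auto
    next
      case False
      then obtain j0 where j0: "j0 \<in> J" "f j0 \<noteq> 0" by blast
      \<comment> \<open>Use the equation f to eliminate the unknown j0.\<close>
      define reduce where "reduce g j = g j - g j0 / f j0 * f j" for g :: "'j \<Rightarrow> real" and j
      have "finite (reduce ` ?Q)" "finite (J - {j0})" using less.prems by auto
      moreover have "card (reduce ` ?Q) < card Q"
        using card_image_le[of ?Q reduce] card_Q less.prems(1) by simp
      moreover have "card (reduce ` ?Q) < card (J - {j0})"
        using card_image_le[of ?Q reduce] less.prems j0 card_Q by simp
      ultimately obtain l' where l': "\<exists>j\<in>J - {j0}. l' j \<noteq> 0"
          "\<forall>g\<in>reduce ` ?Q. (\<Sum>j\<in>J - {j0}. l' j * g j) = 0"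
        using less.hyps by blast
      then obtain l where "\<forall>j\<in>J - {j0}. l j = l' j" "\<forall>g\<in>insert f ?Q. (\<Sum>j\<in>J. l j * g j) = 0"
        using extend_eliminated_solution[where f = f and Q = ?Q and l' = l', OF less.prems(2) j0] by (auto simp: reduce_def)
      with l'(1) f show ?thesis by (intro exI[of _ l]) (auto simp: insert_absorb)
    qed
  qed
qed

lemma aff_independent_length_le:
  fixes ps :: "('i \<Rightarrow> real) list" and coord :: "'k \<Rightarrow> ('i \<Rightarrow> real) \<Rightarrow> real"
  assumes indep: "aff_independent ps" and "finite K"
    and determined: "\<And>l. (\<Sum>j<length ps. l j) = 0 \<Longrightarrow>
        \<forall>k\<in>K. (\<Sum>j<length ps. l j * coord k (ps ! j)) = 0 \<Longrightarrow>
        \<forall>i. (\<Sum>j<length ps. l j * (ps ! j) i) = 0"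
  shows "length ps \<le> Suc (card K)"
proof (rule ccontr)
  define Q where "Q = insert (\<lambda>_. 1) ((\<lambda>k j. coord k (ps ! j)) ` K)"
  have "card Q \<le> Suc (card K)"
    unfolding Q_def using card_image_le[OF \<open>finite K\<close>, of "\<lambda>k j. coord k (ps ! j)"]
    by (simp add: card_insert_if \<open>finite K\<close>)
  moreover assume "\<not> length ps \<le> Suc (card K)"
  ultimately have "card Q < card {..<length ps}" by simp
  moreover have "finite Q" using \<open>finite K\<close> by (simp add: Q_def)
  ultimately obtain l where nontrivial: "\<exists>j<length ps. l j \<noteq> 0"
    and solution: "\<forall>f\<in>Q. (\<Sum>j<length ps. l j * f j) = 0"
    using exists_nontrivial_solution[of Q "{..<length ps}"] by auto
  from solution have "(\<Sum>j<length ps. l j) = 0"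
    and "\<forall>k\<in>K. (\<Sum>j<length ps. l j * coord k (ps ! j)) = 0"
    by (auto simp: Q_def)
  with indep determined nontrivial show False
    unfolding aff_independent_def by blast
qed

lemma aff_independent_map_affine:
  assumes indep: "aff_independent ps" and "e \<noteq> 0"
  shows "aff_independent (map (\<lambda>V i. u i + V i / e) ps)"
  unfolding aff_independent_def length_map
proof (rule allI, rule impI)
  fix l :: "nat \<Rightarrow> real"
  assume "(\<Sum>j<length ps. l j) = 0 \<and>
    (\<forall>i. (\<Sum>j<length ps. l j * (map (\<lambda>V i. u i + V i / e) ps ! j) i) = 0)"
  then have sum_l: "(\<Sum>j<length ps. l j) = 0"
    and comb: "\<And>i. (\<Sum>j<length ps. l j * (u i + (ps ! j) i / e)) = 0"
    by auto
  have "(\<Sum>j<length ps. l j * (ps ! j) i) = 0" for i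
  proof -
    have "(\<Sum>j<length ps. l j * (u i + (ps ! j) i / e))
        = u i * (\<Sum>j<length ps. l j) + (\<Sum>j<length ps. l j * (ps ! j) i) / e"
      by (simp add: distrib_left sum.distrib sum_distrib_left sum_divide_distrib mult_ac)
    with comb[of i] sum_l \<open>e \<noteq> 0\<close> show ?thesis by simp
  qed
  with indep sum_l show "\<forall>j<length ps. l j = 0"
    unfolding aff_independent_def by blast
qed

lemma aff_independent_zero_Cons:
  assumes lin_indep: "\<And>c. \<forall>i. (\<Sum>k<length ws. c k * (ws ! k) i) = 0 \<Longrightarrow> \<forall>k<length ws. c k = 0"
  shows "aff_independent ((\<lambda>_. 0) # ws)"
  unfolding aff_independent_def length_Cons
proof (rule allI, rule impI)
  fix l :: "nat \<Rightarrow> real"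
  assume "(\<Sum>j<Suc (length ws). l j) = 0 \<and>
    (\<forall>i. (\<Sum>j<Suc (length ws). l j * (((\<lambda>_. 0) # ws) ! j) i) = 0)"
  then have sum_l: "l 0 + (\<Sum>k<length ws. l (Suc k)) = 0"
    and "\<forall>i. (\<Sum>k<length ws. l (Suc k) * (ws ! k) i) = 0"
    by (simp_all only: sum.lessThan_Suc_shift nth_Cons_0 nth_Cons_Suc) simp_all
  then have "\<forall>k<length ws. l (Suc k) = 0" using lin_indep[of "\<lambda>k. l (Suc k)"] by blast
  with sum_l show "\<forall>j<Suc (length ws). l j = 0"
    by (auto simp: less_Suc_eq_0_disj)
qed

section \<open>Coordinates for one party\<close>

abbreviation io_pairs :: "nat \<Rightarrow> nat \<Rightarrow> (nat \<times> nat) set" where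
  "io_pairs m n \<equiv> {1..n} \<times> {1..m}"

(* The marginal over outcomes of local_basis t does not depend on the input unless
   t = (n, x) with x >= 2; local_coord is the dual basis (local_coord_local_basis). *)
fun local_basis :: "nat \<Rightarrow> nat \<Rightarrow> nat \<times> nat \<Rightarrow> nat \<Rightarrow> nat \<Rightarrow> real" where
  "local_basis m n (a0, x0) a x =
     (if a0 < n then (if x = x0 then of_bool (a = a0) - of_bool (a = n) else 0)
      else if x0 = 1 then of_bool (a = n \<and> x \<in> {1..m})
      else of_bool (a = n \<and> x = x0))"

fun local_coord :: "nat \<Rightarrow> nat \<times> nat \<Rightarrow> (nat \<Rightarrow> nat \<Rightarrow> real) \<Rightarrow> real" where
  "local_coord n (a0, x0) f =
     (if a0 < n then f a0 x0
      else if x0 = 1 then (\<Sum>a=1..n. f a 1)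
      else (\<Sum>a=1..n. f a x0) - (\<Sum>a=1..n. f a 1))"

lemma local_basis_eq_0:
  assumes "t \<in> io_pairs m n" "\<not> (a \<in> {1..n} \<and> x \<in> {1..m})"
  shows "local_basis m n t a x = 0"
  using assms by (cases t) auto

lemma abs_local_basis_le_1: "\<bar>local_basis m n t a x\<bar> \<le> 1"
  by (cases t) auto

lemma local_basis_below_last:
  assumes "a < n" "t \<in> io_pairs m n"
  shows "local_basis m n t a x = of_bool (t = (a, x))"
  using assms by (cases t) auto

lemma sum_local_basis:
  assumes "t \<in> io_pairs m n" "x \<in> {1..m}"
  shows "(\<Sum>a=1..n. local_basis m n t a x) =
    (if fst t < n then 0 else if snd t = 1 then 1 else of_bool (x = snd t))"
  using assms by (cases t) (auto simp: sum_subtractf)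

lemma local_coord_local_basis:
  assumes "s \<in> io_pairs m n" "t \<in> io_pairs m n"
  shows "local_coord n s (local_basis m n t) = of_bool (s = t)"
proof -
  obtain a0 x0 where s: "s = (a0, x0)" by fastforce
  have "x0 \<in> {1..m}" "1 \<in> {1..m}" using assms s by auto
  note sums = sum_local_basis[OF assms(2) this(1)] sum_local_basis[OF assms(2) this(2)]
  show ?thesis
  proof (cases "a0 < n")
    case True
    then show ?thesis using local_basis_below_last[OF True assms(2)] s by simp
  next
    case False
    then have "a0 = n" using assms s by auto
    then show ?thesis using assms(2) False unfolding s local_coord.simps sums
      by (cases t) auto
  qed
qed

lemma local_coord_cong:
  assumes "s \<in> io_pairs m n" "\<And>a x. a \<in> {1..n} \<Longrightarrow> x \<in> {1..m} \<Longrightarrow> f a x = g a x"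
  shows "local_coord n s f = local_coord n s g"
  using assms by (cases s) (auto intro!: sum.cong)

lemma local_coord_zero [simp]: "local_coord n s (\<lambda>_ _. 0) = 0"
  by (cases s) simp

lemma local_coord_eq_0:
  assumes "s \<in> io_pairs m n" "\<And>a x. a \<in> {1..n} \<Longrightarrow> x \<in> {1..m} \<Longrightarrow> f a x = 0"
  shows "local_coord n s f = 0"
  using local_coord_cong[where g = "\<lambda>_ _. 0", OF assms] by simp

lemma local_coord_sum:
  "local_coord n s (\<lambda>a x. \<Sum>i\<in>I. f i a x) = (\<Sum>i\<in>I. local_coord n s (f i))"
  by (cases s) (simp add: sum.swap[where B = I] sum_subtractf)

lemma local_coord_scale: "local_coord n s (\<lambda>a x. c * f a x) = c * local_coord n s f"
  by (cases s) (auto simp: sum_distrib_left right_diff_distrib)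

lemma local_coord_scale_right: "local_coord n s (\<lambda>a x. f a x * c) = local_coord n s f * c"
  using local_coord_scale[of n s c f] by (simp add: mult.commute)

lemma local_coords_eq_0_imp:
  assumes coords: "\<And>s. s \<in> io_pairs m n \<Longrightarrow> local_coord n s f = 0"
    and "a \<in> {1..n}" "x \<in> {1..m}"
  shows "f a x = 0"
proof -
  have below: "f a' x' = 0" if "a' \<in> {1..<n}" "x' \<in> {1..m}" for a' x'
    using coords[of "(a', x')"] that by auto
  have sum_eq: "(\<Sum>a'=1..n. f a' x') = f n x'" if "x' \<in> {1..m}" for x'
  proof -
    have "{1..n} = insert n {1..<n}" using assms(2) by auto
    then show ?thesis using below[OF _ that] by simp
  qed
  have "f n 1 = 0" using coords[of "(n, 1)"] sum_eq[of 1] assms by auto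
  moreover have "f n x = f n 1" using coords[of "(n, x)"] sum_eq[of 1] sum_eq[of x] assms
    by (cases "x = 1") auto
  ultimately show ?thesis using below[of a x] assms by (cases "a < n") auto
qed

section \<open>Tensor-product coordinates\<close>

definition tensor :: "(nat \<Rightarrow> nat \<Rightarrow> real) \<Rightarrow> (nat \<Rightarrow> nat \<Rightarrow> real) \<Rightarrow> (nat \<Rightarrow> nat \<Rightarrow> real) \<Rightarrow> behaviour" where
  "tensor f g h = (\<lambda>(a, b, c, x, y, z). f a x * g b y * h c z)"

fun basis :: "nat \<Rightarrow> nat \<Rightarrow> (nat \<times> nat) \<times> (nat \<times> nat) \<times> (nat \<times> nat) \<Rightarrow> behaviour" where
  "basis m n (s, u, v) = tensor (local_basis m n s) (local_basis m n u) (local_basis m n v)"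

fun coord :: "nat \<Rightarrow> (nat \<times> nat) \<times> (nat \<times> nat) \<times> (nat \<times> nat) \<Rightarrow> behaviour \<Rightarrow> real" where
  "coord n (s, u, v) R =
     local_coord n s (\<lambda>a x. local_coord n u (\<lambda>b y. local_coord n v (\<lambda>c z. R (a, b, c, x, y, z))))"

lemma tensor_apply [simp]: "tensor f g h (a, b, c, x, y, z) = f a x * g b y * h c z"
  by (simp add: tensor_def)

lemma tensor_eq_0:
  assumes "\<And>a x. \<not> (a \<in> {1..n} \<and> x \<in> {1..m}) \<Longrightarrow> f a x = 0"
    and "\<And>a x. \<not> (a \<in> {1..n} \<and> x \<in> {1..m}) \<Longrightarrow> g a x = 0"
    and "\<And>a x. \<not> (a \<in> {1..n} \<and> x \<in> {1..m}) \<Longrightarrow> h a x = 0"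
    and "\<not> (a \<in> {1..n} \<and> b \<in> {1..n} \<and> c \<in> {1..n} \<and> x \<in> {1..m} \<and> y \<in> {1..m} \<and> z \<in> {1..m})"
  shows "tensor f g h (a, b, c, x, y, z) = 0"
  using assms(4) assms(1)[of a x] assms(2)[of b y] assms(3)[of c z] by auto

lemma sum_tensor:
  "(\<Sum>a\<in>A. \<Sum>b\<in>B. \<Sum>c\<in>C. tensor f g h (a, b, c, x, y, z)) =
     (\<Sum>a\<in>A. f a x) * (\<Sum>b\<in>B. g b y) * (\<Sum>c\<in>C. h c z)"
  by (simp only: tensor_apply sum_distrib_left[symmetric] sum_distrib_right[symmetric])

lemma coord_tensor:
  "coord n (s, u, v) (tensor f g h) = local_coord n s f * local_coord n u g * local_coord n v h"
  by (simp add: local_coord_scale local_coord_scale_right)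

lemma coord_basis:
  assumes "k \<in> io_pairs m n \<times> io_pairs m n \<times> io_pairs m n"
    and "k' \<in> io_pairs m n \<times> io_pairs m n \<times> io_pairs m n"
  shows "coord n k' (basis m n k) = of_bool (k' = k)"
proof -
  obtain s u v s' u' v' where k: "k = (s, u, v)" "k' = (s', u', v')" by (cases k, cases k')
  with assms show ?thesis
    unfolding k basis.simps coord_tensor by (simp add: local_coord_local_basis)
qed

lemma coord_zero: "coord n k (\<lambda>_. 0) = 0"
  by (cases k) simp

lemma coord_sum: "coord n k (\<lambda>i. \<Sum>j\<in>J. g j i) = (\<Sum>j\<in>J. coord n k (g j))"
  by (cases k) (simp add: local_coord_sum)

lemma coord_scale: "coord n k (\<lambda>i. c * R i) = c * coord n k R"
  by (cases k) (simp add: local_coord_scale)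

lemma coords_eq_0_imp:
  assumes coords: "\<And>k. k \<in> io_pairs m n \<times> io_pairs m n \<times> io_pairs m n \<Longrightarrow> coord n k R = 0"
    and "(a, x) \<in> io_pairs m n" "(b, y) \<in> io_pairs m n" "(c, z) \<in> io_pairs m n"
  shows "R (a, b, c, x, y, z) = 0"
proof -
  have "local_coord n u (\<lambda>b y. local_coord n v (\<lambda>c z. R (a, b, c, x, y, z))) = 0"
    if "u \<in> io_pairs m n" "v \<in> io_pairs m n" for u v
    using local_coords_eq_0_imp[of n m "\<lambda>a x. local_coord n u (\<lambda>b y. local_coord n v (\<lambda>c z. R (a, b, c, x, y, z)))"]
      coords that assms(2) by auto
  then have "local_coord n v (\<lambda>c z. R (a, b, c, x, y, z)) = 0" if "v \<in> io_pairs m n" for v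
    using local_coords_eq_0_imp[of n m "\<lambda>b y. local_coord n v (\<lambda>c z. R (a, b, c, x, y, z))"]
      that assms(3) by auto
  then show ?thesis
    using local_coords_eq_0_imp[of n m "\<lambda>c z. R (a, b, c, x, y, z)"] assms(4) by auto
qed

lemma basis_lin_independent:
  assumes "distinct ks" "set ks \<subseteq> io_pairs m n \<times> io_pairs m n \<times> io_pairs m n"
    and comb: "\<forall>i. (\<Sum>k<length ks. c k * basis m n (ks ! k) i) = 0"
  shows "\<forall>k<length ks. c k = 0"
proof (intro allI impI)
  fix k0 assume k0: "k0 < length ks"
  have io: "ks ! k \<in> io_pairs m n \<times> io_pairs m n \<times> io_pairs m n" if "k < length ks" for k
    using assms(2) that nth_mem by blast
  from comb have "(\<lambda>i. \<Sum>k<length ks. c k * basis m n (ks ! k) i) = (\<lambda>_. 0)" by blast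
  then have "0 = coord n (ks ! k0) (\<lambda>i. \<Sum>k<length ks. c k * basis m n (ks ! k) i)"
    by (simp add: coord_zero)
  also have "\<dots> = (\<Sum>k<length ks. c k * of_bool (ks ! k0 = ks ! k))"
    using io k0 by (simp add: coord_sum coord_scale coord_basis)
  also have "\<dots> = (\<Sum>k<length ks. if k = k0 then c k else 0)"
    using assms(1) k0 by (intro sum.cong) (auto simp: nth_eq_iff_index_eq)
  also have "\<dots> = c k0" using k0 by simp
  finally show "c k0 = 0" by simp
qed

section \<open>The relativistic causal constraints\<close>

definition rel_causal :: "nat \<Rightarrow> nat \<Rightarrow> behaviour \<Rightarrow> bool" where
  "rel_causal m n P \<longleftrightarrow>
     (\<forall>x\<in>{1..m}. \<forall>x'\<in>{1..m}. \<forall>y\<in>{1..m}. \<forall>z\<in>{1..m}. \<forall>b\<in>{1..n}. \<forall>c\<in>{1..n}.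
        (\<Sum>a\<in>{1..n}. P (a,b,c,x,y,z)) = (\<Sum>a\<in>{1..n}. P (a,b,c,x',y,z))) \<and>
     (\<forall>z\<in>{1..m}. \<forall>z'\<in>{1..m}. \<forall>x\<in>{1..m}. \<forall>y\<in>{1..m}. \<forall>a\<in>{1..n}. \<forall>b\<in>{1..n}.
        (\<Sum>c\<in>{1..n}. P (a,b,c,x,y,z)) = (\<Sum>c\<in>{1..n}. P (a,b,c,x,y,z'))) \<and>
     (\<forall>y\<in>{1..m}. \<forall>y'\<in>{1..m}. \<forall>z\<in>{1..m}. \<forall>z'\<in>{1..m}. \<forall>x\<in>{1..m}. \<forall>a\<in>{1..n}.
        (\<Sum>b\<in>{1..n}. \<Sum>c\<in>{1..n}. P (a,b,c,x,y,z)) = (\<Sum>b\<in>{1..n}. \<Sum>c\<in>{1..n}. P (a,b,c,x,y',z'))) \<and>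
     (\<forall>x\<in>{1..m}. \<forall>x'\<in>{1..m}. \<forall>y\<in>{1..m}. \<forall>y'\<in>{1..m}. \<forall>z\<in>{1..m}. \<forall>c\<in>{1..n}.
        (\<Sum>a\<in>{1..n}. \<Sum>b\<in>{1..n}. P (a,b,c,x,y,z)) = (\<Sum>a\<in>{1..n}. \<Sum>b\<in>{1..n}. P (a,b,c,x',y',z)))"

lemma RC3_iff:
  "P \<in> RC3 m n \<longleftrightarrow>
     (\<forall>a b c x y z. \<not> (a \<in> {1..n} \<and> b \<in> {1..n} \<and> c \<in> {1..n} \<and> x \<in> {1..m} \<and> y \<in> {1..m} \<and> z \<in> {1..m})
        \<longrightarrow> P (a,b,c,x,y,z) = 0) \<and>
     (\<forall>a\<in>{1..n}. \<forall>b\<in>{1..n}. \<forall>c\<in>{1..n}. \<forall>x\<in>{1..m}. \<forall>y\<in>{1..m}. \<forall>z\<in>{1..m}.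
        P (a,b,c,x,y,z) \<ge> 0) \<and>
     (\<forall>x\<in>{1..m}. \<forall>y\<in>{1..m}. \<forall>z\<in>{1..m}.
        (\<Sum>a\<in>{1..n}. \<Sum>b\<in>{1..n}. \<Sum>c\<in>{1..n}. P (a,b,c,x,y,z)) = 1) \<and>
     rel_causal m n P"
  unfolding RC3_def rel_causal_def mem_Collect_eq ..

lemma rel_causalD_BC:
  "rel_causal m n P \<Longrightarrow> x \<in> {1..m} \<Longrightarrow> x' \<in> {1..m} \<Longrightarrow> y \<in> {1..m} \<Longrightarrow> z \<in> {1..m} \<Longrightarrow>
    b \<in> {1..n} \<Longrightarrow> c \<in> {1..n} \<Longrightarrow>
    (\<Sum>a\<in>{1..n}. P (a,b,c,x,y,z)) = (\<Sum>a\<in>{1..n}. P (a,b,c,x',y,z))"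
  using rel_causal_def[THEN iffD1, THEN conjunct1] by blast

lemma rel_causalD_AB:
  "rel_causal m n P \<Longrightarrow> z \<in> {1..m} \<Longrightarrow> z' \<in> {1..m} \<Longrightarrow> x \<in> {1..m} \<Longrightarrow> y \<in> {1..m} \<Longrightarrow>
    a \<in> {1..n} \<Longrightarrow> b \<in> {1..n} \<Longrightarrow>
    (\<Sum>c\<in>{1..n}. P (a,b,c,x,y,z)) = (\<Sum>c\<in>{1..n}. P (a,b,c,x,y,z'))"
  using rel_causal_def[THEN iffD1, THEN conjunct2, THEN conjunct1] by blast

lemma rel_causalD_A:
  "rel_causal m n P \<Longrightarrow> y \<in> {1..m} \<Longrightarrow> y' \<in> {1..m} \<Longrightarrow> z \<in> {1..m} \<Longrightarrow> z' \<in> {1..m} \<Longrightarrow>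
    x \<in> {1..m} \<Longrightarrow> a \<in> {1..n} \<Longrightarrow>
    (\<Sum>b\<in>{1..n}. \<Sum>c\<in>{1..n}. P (a,b,c,x,y,z)) = (\<Sum>b\<in>{1..n}. \<Sum>c\<in>{1..n}. P (a,b,c,x,y',z'))"
  using rel_causal_def[THEN iffD1, THEN conjunct2, THEN conjunct2, THEN conjunct1] by blast

lemma rel_causalD_C:
  "rel_causal m n P \<Longrightarrow> x \<in> {1..m} \<Longrightarrow> x' \<in> {1..m} \<Longrightarrow> y \<in> {1..m} \<Longrightarrow> y' \<in> {1..m} \<Longrightarrow>
    z \<in> {1..m} \<Longrightarrow> c \<in> {1..n} \<Longrightarrow>
    (\<Sum>a\<in>{1..n}. \<Sum>b\<in>{1..n}. P (a,b,c,x,y,z)) = (\<Sum>a\<in>{1..n}. \<Sum>b\<in>{1..n}. P (a,b,c,x',y',z))"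
  using rel_causal_def[THEN iffD1, THEN conjunct2, THEN conjunct2, THEN conjunct2] by blast

lemma rel_causal_add:
  assumes "rel_causal m n P" "rel_causal m n Q"
  shows "rel_causal m n (\<lambda>i. P i + Q i)"
  unfolding rel_causal_def sum.distrib
  by (intro conjI ballI arg_cong2[where f = plus] rel_causalD_BC[OF assms(1)] rel_causalD_BC[OF assms(2)]
      rel_causalD_AB[OF assms(1)] rel_causalD_AB[OF assms(2)] rel_causalD_A[OF assms(1)]
      rel_causalD_A[OF assms(2)] rel_causalD_C[OF assms(1)] rel_causalD_C[OF assms(2)])

lemma rel_causal_scale:
  assumes "rel_causal m n P"
  shows "rel_causal m n (\<lambda>i. c * P i)"
  unfolding rel_causal_def sum_distrib_left[symmetric]
  by (intro conjI ballI arg_cong[where f = "times c"] rel_causalD_BC[OF assms]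
      rel_causalD_AB[OF assms] rel_causalD_A[OF assms] rel_causalD_C[OF assms])

lemma rel_causal_sum:
  assumes "finite J" "\<And>j. j \<in> J \<Longrightarrow> rel_causal m n (P j)"
  shows "rel_causal m n (\<lambda>i. \<Sum>j\<in>J. c j * P j i)"
  using assms
proof (induction J rule: finite_induct)
  case empty
  then show ?case by (simp add: rel_causal_def)
next
  case (insert j J)
  then show ?case by (simp add: rel_causal_add rel_causal_scale)
qed

lemma rel_causal_tensor:
  assumes "\<And>x. x \<in> {1..m} \<Longrightarrow> (\<Sum>a=1..n. f a x) = \<sigma>f"
    and "\<And>z. z \<in> {1..m} \<Longrightarrow> (\<Sum>c=1..n. h c z) = \<sigma>h"
    and "(\<exists>\<sigma>g. \<forall>y\<in>{1..m}. (\<Sum>b=1..n. g b y) = \<sigma>g) \<or> \<sigma>f = 0 \<and> \<sigma>h = 0"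
  shows "rel_causal m n (tensor f g h)"
  using assms unfolding rel_causal_def tensor_apply
  by (simp only: sum_distrib_left[symmetric] sum_distrib_right[symmetric]) auto

definition RC3_lin :: "nat \<Rightarrow> nat \<Rightarrow> behaviour set" where
  "RC3_lin m n = {R.
     (\<forall>a b c x y z. \<not> (a \<in> {1..n} \<and> b \<in> {1..n} \<and> c \<in> {1..n} \<and> x \<in> {1..m} \<and> y \<in> {1..m} \<and> z \<in> {1..m})
        \<longrightarrow> R (a,b,c,x,y,z) = 0) \<and>
     (\<forall>x\<in>{1..m}. \<forall>y\<in>{1..m}. \<forall>z\<in>{1..m}.
        (\<Sum>a\<in>{1..n}. \<Sum>b\<in>{1..n}. \<Sum>c\<in>{1..n}. R (a,b,c,x,y,z)) = 0) \<and>
     rel_causal m n R}"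

lemma RC3_lin_rel_causal: "R \<in> RC3_lin m n \<Longrightarrow> rel_causal m n R"
  by (simp add: RC3_lin_def)

lemma zero_in_RC3_lin: "(\<lambda>_. 0) \<in> RC3_lin m n"
  by (simp add: RC3_lin_def rel_causal_def)

lemma lincomb_in_RC3_lin:
  assumes ps: "set ps \<subseteq> RC3 m n" and sum_l: "(\<Sum>j<length ps. l j) = 0"
  shows "(\<lambda>i. \<Sum>j<length ps. l j * (ps ! j) i) \<in> RC3_lin m n"
proof -
  have P: "ps ! j \<in> RC3 m n" if "j < length ps" for j using ps that by auto
  have "(\<Sum>a\<in>{1..n}. \<Sum>b\<in>{1..n}. \<Sum>c\<in>{1..n}. \<Sum>j<length ps. l j * (ps ! j) (a,b,c,x,y,z)) = 0"
    if "x \<in> {1..m}" "y \<in> {1..m}" "z \<in> {1..m}" for x y z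
  proof -
    have "(\<Sum>a\<in>{1..n}. \<Sum>b\<in>{1..n}. \<Sum>c\<in>{1..n}. \<Sum>j<length ps. l j * (ps ! j) (a,b,c,x,y,z))
        = (\<Sum>j<length ps. l j * (\<Sum>a\<in>{1..n}. \<Sum>b\<in>{1..n}. \<Sum>c\<in>{1..n}. (ps ! j) (a,b,c,x,y,z)))"
      by (simp only: sum_distrib_left sum.swap[where B = "{..<length ps}"])
    also have "\<dots> = (\<Sum>j<length ps. l j)"
      using P that by (simp add: RC3_iff)
    finally show ?thesis using sum_l by simp
  qed
  with P show ?thesis
    unfolding RC3_lin_def by (auto simp: RC3_iff intro!: rel_causal_sum)
qed

definition uniform_local :: "nat \<Rightarrow> nat \<Rightarrow> nat \<Rightarrow> nat \<Rightarrow> real" where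
  "uniform_local m n a x = of_bool (a \<in> {1..n} \<and> x \<in> {1..m}) / real n"

definition uniform :: "nat \<Rightarrow> nat \<Rightarrow> behaviour" where
  "uniform m n = tensor (uniform_local m n) (uniform_local m n) (uniform_local m n)"

lemma sum_uniform_local:
  assumes "n \<ge> 1" "x \<in> {1..m}"
  shows "(\<Sum>a=1..n. uniform_local m n a x) = 1"
  using assms by (simp add: uniform_local_def)

lemma perturbed_uniform_in_RC3:
  assumes "n \<ge> 1" and V: "V \<in> RC3_lin m n" and bounded: "\<And>i. \<bar>V i\<bar> \<le> 1"
  shows "(\<lambda>i. uniform m n i + V i / real n ^ 3) \<in> RC3 m n"
proof -
  have "rel_causal m n (uniform m n)"
    unfolding uniform_def using sum_uniform_local[OF \<open>n \<ge> 1\<close>] by (intro rel_causal_tensor) auto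
  moreover have "rel_causal m n (\<lambda>i. inverse (real n ^ 3) * V i)"
    using V by (intro rel_causal_scale) (simp add: RC3_lin_def)
  ultimately have "rel_causal m n (\<lambda>i. uniform m n i + V i / real n ^ 3)"
    by (simp add: rel_causal_add divide_inverse mult.commute)
  moreover have "uniform m n i + V i / real n ^ 3 \<ge> 0" if "i \<in> {1..n} \<times> {1..n} \<times> {1..n} \<times> {1..m} \<times> {1..m} \<times> {1..m}" for i
  proof -
    have "uniform m n i = 1 / real n ^ 3"
      using that by (auto simp: uniform_def uniform_local_def power3_eq_cube)
    moreover have "- 1 \<le> V i" using bounded[of i] by simp
    ultimately show ?thesis using \<open>n \<ge> 1\<close> by (simp add: divide_simps)
  qed
  moreover have "(\<Sum>a\<in>{1..n}. \<Sum>b\<in>{1..n}. \<Sum>c\<in>{1..n}. uniform m n (a,b,c,x,y,z)) = 1"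
    if "x \<in> {1..m}" "y \<in> {1..m}" "z \<in> {1..m}" for x y z
    unfolding uniform_def sum_tensor using sum_uniform_local[OF \<open>n \<ge> 1\<close>] that by simp
  ultimately show ?thesis
    using V unfolding RC3_iff RC3_lin_def
    by (auto simp: sum.distrib sum_divide_distrib[symmetric] uniform_def uniform_local_def)
qed

section \<open>Free coordinates\<close>

definition reduced_pairs :: "nat \<Rightarrow> nat \<Rightarrow> (nat \<times> nat) set" where
  "reduced_pairs m n = insert (n, 1) ({1..<n} \<times> {1..m})"

lemma reduced_pairs_subset:
  "m \<ge> 1 \<Longrightarrow> n \<ge> 1 \<Longrightarrow> reduced_pairs m n \<subseteq> io_pairs m n"
  by (auto simp: reduced_pairs_def)

lemma nonreduced_pair:
  assumes "t \<in> io_pairs m n" "t \<notin> reduced_pairs m n"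
  obtains x0 where "x0 \<in> {2..m}" "t = (n, x0)"
  using assms by (cases t) (force simp: reduced_pairs_def)

definition free_coords :: "nat \<Rightarrow> nat \<Rightarrow> ((nat \<times> nat) \<times> (nat \<times> nat) \<times> (nat \<times> nat)) set" where
  "free_coords m n =
     (reduced_pairs m n \<times> reduced_pairs m n \<times> reduced_pairs m n - {((n, 1), (n, 1), (n, 1))}) \<union>
     ({1..<n} \<times> {1..m}) \<times> ({n} \<times> {2..m}) \<times> ({1..<n} \<times> {1..m})"

lemma free_coords_subset:
  assumes "m \<ge> 1" "n \<ge> 1"
  shows "free_coords m n \<subseteq> io_pairs m n \<times> io_pairs m n \<times> io_pairs m n"
  using reduced_pairs_subset[OF assms] by (auto simp: free_coords_def)

lemma finite_free_coords: "finite (free_coords m n)"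
  by (simp add: free_coords_def reduced_pairs_def)

lemma card_free_coords:
  "card (free_coords m n) = ((n - 1) * m + 1) ^ 3 - 1 + (n - 1) * m * ((m - 1) * ((n - 1) * m))"
proof -
  have card_reduced: "card (reduced_pairs m n) = (n - 1) * m + 1"
    by (simp add: reduced_pairs_def card_cartesian_product)
  have "((n, 1), (n, 1), (n, 1)) \<in> reduced_pairs m n \<times> reduced_pairs m n \<times> reduced_pairs m n"
    by (simp add: reduced_pairs_def)
  then have "card (reduced_pairs m n \<times> reduced_pairs m n \<times> reduced_pairs m n - {((n, 1), (n, 1), (n, 1))})
      = ((n - 1) * m + 1) ^ 3 - 1"
    by (simp add: card_cartesian_product card_reduced power3_eq_cube)
  moreover have "card (({1..<n} \<times> {1..m}) \<times> ({n} \<times> {2..m}) \<times> ({1..<n} \<times> {1..m}))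
      = (n - 1) * m * ((m - 1) * ((n - 1) * m))"
    by (simp add: card_cartesian_product)
  moreover have "(reduced_pairs m n \<times> reduced_pairs m n \<times> reduced_pairs m n - {((n, 1), (n, 1), (n, 1))})
      \<inter> ({1..<n} \<times> {1..m}) \<times> ({n} \<times> {2..m}) \<times> ({1..<n} \<times> {1..m}) = {}"
    by (auto simp: reduced_pairs_def)
  ultimately show ?thesis
    unfolding free_coords_def by (simp add: card_Un_disjoint reduced_pairs_def)
qed

lemma int_card_free_coords:
  assumes "m \<ge> 1" "n \<ge> 1"
  shows "int (card (free_coords m n)) =
    (int m * (int n - 1) + 1) ^ 3 + int m ^ 2 * (int m - 1) * (int n - 1) ^ 2 - 1"
proof -
  obtain m' where "m = Suc m'" using assms(1) by (cases m) auto
  moreover obtain n' where "n = Suc n'" using assms(2) by (cases n) auto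
  ultimately show ?thesis by (simp add: card_free_coords algebra_simps power2_eq_square power3_eq_cube)
qed

lemma sum_local_basis_reduced:
  assumes "m \<ge> 1" "n \<ge> 1" "t \<in> reduced_pairs m n" "x \<in> {1..m}"
  shows "(\<Sum>a=1..n. local_basis m n t a x) = of_bool (t = (n, 1))"
proof -
  have "t \<in> io_pairs m n" using reduced_pairs_subset[OF assms(1,2)] assms(3) by blast
  then have "(\<Sum>a=1..n. local_basis m n t a x) =
      (if fst t < n then 0 else if snd t = 1 then 1 else of_bool (x = snd t))"
    using assms(4) by (rule sum_local_basis)
  also have "\<dots> = of_bool (t = (n, 1))"
    using assms(3) by (auto simp: reduced_pairs_def)
  finally show ?thesis .
qed

lemma basis_in_RC3_lin:
  assumes "m \<ge> 1" "n \<ge> 1" "k \<in> free_coords m n"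
  shows "basis m n k \<in> RC3_lin m n"
proof -
  obtain s u v where k: "k = (s, u, v)" by (cases k) auto
  have io: "s \<in> io_pairs m n" "u \<in> io_pairs m n" "v \<in> io_pairs m n"
    using free_coords_subset[OF assms(1,2)] assms(3) k by auto
  let ?\<sigma> = "\<lambda>t x. \<Sum>a=1..n. local_basis m n t a x"
  consider (local) "s \<in> reduced_pairs m n" "u \<in> reduced_pairs m n" "v \<in> reduced_pairs m n"
      "(s, u, v) \<noteq> ((n, 1), (n, 1), (n, 1))"
    | (crossed) "s \<in> {1..<n} \<times> {1..m}" "v \<in> {1..<n} \<times> {1..m}"
    using assms(3) k by (auto simp: free_coords_def)
  then have "rel_causal m n (basis m n k) \<and>
      (\<forall>x\<in>{1..m}. \<forall>y\<in>{1..m}. \<forall>z\<in>{1..m}. ?\<sigma> s x * ?\<sigma> u y * ?\<sigma> v z = 0)"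
  proof cases
    case local
    have \<sigma>: "?\<sigma> t x = of_bool (t = (n, 1))" if "t \<in> {s, u, v}" "x \<in> {1..m}" for t x
    proof -
      have "t \<in> reduced_pairs m n" using local that(1) by blast
      with that(2) show ?thesis by (intro sum_local_basis_reduced[OF assms(1,2)])
    qed
    have "rel_causal m n (tensor (local_basis m n s) (local_basis m n u) (local_basis m n v))"
      by (rule rel_causal_tensor[where \<sigma>f = "of_bool (s = (n, 1))" and \<sigma>h = "of_bool (v = (n, 1))"])
        (use \<sigma> in auto)
    with \<sigma> local(4) show ?thesis by (simp add: k)
  next
    case crossed
    then have "?\<sigma> s x = 0" "?\<sigma> v x = 0" if "x \<in> {1..m}" for x
      using sum_local_basis[where t = s] sum_local_basis[where t = v] io that by (simp_all add: mem_Times_iff)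
    then show ?thesis
      using rel_causal_tensor[where f = "local_basis m n s" and g = "local_basis m n u"
          and h = "local_basis m n v" and \<sigma>f = 0 and \<sigma>h = 0 and m = m and n = n]
      by (simp add: k)
  qed
  moreover have "basis m n k (a, b, c, x, y, z) = 0"
    if "\<not> (a \<in> {1..n} \<and> b \<in> {1..n} \<and> c \<in> {1..n} \<and> x \<in> {1..m} \<and> y \<in> {1..m} \<and> z \<in> {1..m})"
    for a b c x y z
    unfolding k basis.simps using local_basis_eq_0 io that by (intro tensor_eq_0) blast+
  ultimately show ?thesis
    unfolding RC3_lin_def mem_Collect_eq k basis.simps sum_tensor by blast
qed

lemma abs_basis_le_1: "\<bar>basis m n k i\<bar> \<le> 1"
proof -
  obtain s u v where "k = (s, u, v)" by (cases k) auto
  moreover obtain a b c x y z where "i = (a, b, c, x, y, z)" by (cases i) auto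
  ultimately show ?thesis
    using abs_local_basis_le_1 by (simp add: abs_mult mult_le_one)
qed

lemma coord_eq_0_A_nonreduced:
  assumes R: "R \<in> RC3_lin m n" and x0: "x0 \<in> {2..m}"
    and "u \<in> io_pairs m n" "v \<in> io_pairs m n"
  shows "coord n ((n, x0), u, v) R = 0"
proof -
  define M where "M x b c y z = (\<Sum>a=1..n. R (a, b, c, x, y, z))" for x b c y z
  have "coord n ((n, x0), u, v) R =
      local_coord n u (\<lambda>b y. local_coord n v (\<lambda>c z. M x0 b c y z)) -
      local_coord n u (\<lambda>b y. local_coord n v (\<lambda>c z. M 1 b c y z))"
    using x0 by (simp add: M_def local_coord_sum)
  also have "local_coord n u (\<lambda>b y. local_coord n v (\<lambda>c z. M x0 b c y z)) =
      local_coord n u (\<lambda>b y. local_coord n v (\<lambda>c z. M 1 b c y z))"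
    unfolding M_def using x0
    by (intro local_coord_cong[where m = m] assms rel_causalD_BC[OF RC3_lin_rel_causal[OF R]]) simp_all
  finally show ?thesis by simp
qed

lemma coord_eq_0_C_nonreduced:
  assumes R: "R \<in> RC3_lin m n" and z0: "z0 \<in> {2..m}"
    and "s \<in> io_pairs m n" "u \<in> io_pairs m n"
  shows "coord n (s, u, (n, z0)) R = 0"
proof -
  have inner: "local_coord n (n, z0) (\<lambda>c z. R (a, b, c, x, y, z)) = 0"
    if "a \<in> {1..n}" "b \<in> {1..n}" "x \<in> {1..m}" "y \<in> {1..m}" for a b x y
    using rel_causalD_AB[OF RC3_lin_rel_causal[OF R], of z0 1 x y a b] that z0 by simp
  then show ?thesis
    unfolding coord.simps by (intro local_coord_eq_0[where m = m] assms inner)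
qed

lemma coord_eq_0_B_nonreduced_C_last:
  assumes R: "R \<in> RC3_lin m n" and y0: "y0 \<in> {2..m}" and "s \<in> io_pairs m n"
  shows "coord n (s, (n, y0), (n, 1)) R = 0"
proof -
  have inner: "local_coord n (n, y0) (\<lambda>b y. local_coord n (n, 1) (\<lambda>c z. R (a, b, c, x, y, z))) = 0"
    if "a \<in> {1..n}" "x \<in> {1..m}" for a x
    using rel_causalD_A[OF RC3_lin_rel_causal[OF R], of y0 1 1 1 x a] that y0 by simp
  then show ?thesis
    unfolding coord.simps by (intro local_coord_eq_0[where m = m] assms inner)
qed

lemma coord_eq_0_B_nonreduced_A_last:
  assumes R: "R \<in> RC3_lin m n" and y0: "y0 \<in> {2..m}" and "v \<in> io_pairs m n"
  shows "coord n ((n, 1), (n, y0), v) R = 0"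
proof -
  define M where "M y c z = (\<Sum>a=1..n. \<Sum>b=1..n. R (a, b, c, 1, y, z))" for y c z
  have "coord n ((n, 1), (n, y0), v) R =
      local_coord n v (\<lambda>c z. M y0 c z) - local_coord n v (\<lambda>c z. M 1 c z)"
    using y0 by (simp add: M_def local_coord_sum sum_subtractf)
  also have "local_coord n v (\<lambda>c z. M y0 c z) = local_coord n v (\<lambda>c z. M 1 c z)"
    unfolding M_def using y0
    by (intro local_coord_cong[where m = m] assms rel_causalD_C[OF RC3_lin_rel_causal[OF R]]) simp_all
  finally show ?thesis by simp
qed

lemma coord_eq_0_normalisation:
  assumes "R \<in> RC3_lin m n" "m \<ge> 1"
  shows "coord n ((n, 1), (n, 1), (n, 1)) R = 0"
  using assms by (simp add: RC3_lin_def)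

lemma coord_eq_0_if_not_free:
  assumes R: "R \<in> RC3_lin m n" and "m \<ge> 1"
    and k: "k \<in> io_pairs m n \<times> io_pairs m n \<times> io_pairs m n" "k \<notin> free_coords m n"
  shows "coord n k R = 0"
proof -
  obtain s u v where k_eq: "k = (s, u, v)" by (cases k) auto
  with k have io: "s \<in> io_pairs m n" "u \<in> io_pairs m n" "v \<in> io_pairs m n" by auto
  consider (A) "s \<notin> reduced_pairs m n" | (C) "v \<notin> reduced_pairs m n"
    | (B) "s \<in> reduced_pairs m n" "u \<notin> reduced_pairs m n" "v \<in> reduced_pairs m n"
    | (local) "s \<in> reduced_pairs m n" "u \<in> reduced_pairs m n" "v \<in> reduced_pairs m n"
    by blast
  then show ?thesis
  proof cases
    case A
    with io(1) obtain x0 where "x0 \<in> {2..m}" "s = (n, x0)" by (rule nonreduced_pair)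
    then show ?thesis using coord_eq_0_A_nonreduced[OF R _ io(2,3)] by (simp only: k_eq)
  next
    case C
    with io(3) obtain z0 where "z0 \<in> {2..m}" "v = (n, z0)" by (rule nonreduced_pair)
    then show ?thesis using coord_eq_0_C_nonreduced[OF R _ io(1,2)] by (simp only: k_eq)
  next
    case B
    obtain y0 where y0: "y0 \<in> {2..m}" "u = (n, y0)" using io(2) B(2) by (rule nonreduced_pair)
    have "k \<in> free_coords m n" if "s \<noteq> (n, 1)" "v \<noteq> (n, 1)"
      using B y0 that by (simp add: k_eq free_coords_def reduced_pairs_def)
    with k(2) consider "s = (n, 1)" | "v = (n, 1)" by blast
    then show ?thesis
    proof cases
      case 1
      then show ?thesis
        using coord_eq_0_B_nonreduced_A_last[OF R y0(1) io(3)] by (simp only: k_eq y0(2))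
    next
      case 2
      then show ?thesis
        using coord_eq_0_B_nonreduced_C_last[OF R y0(1) io(1)] by (simp only: k_eq y0(2))
    qed
  next
    case local
    have "k = ((n, 1), (n, 1), (n, 1))"
    proof (rule ccontr)
      assume "k \<noteq> ((n, 1), (n, 1), (n, 1))"
      with local have "k \<in> free_coords m n" by (simp add: k_eq free_coords_def)
      with k(2) show False ..
    qed
    then show ?thesis using coord_eq_0_normalisation[OF R \<open>m \<ge> 1\<close>] by (simp only:)
  qed
qed

lemma RC3_lin_eq_0:
  assumes R: "R \<in> RC3_lin m n" and "m \<ge> 1" and free: "\<forall>k\<in>free_coords m n. coord n k R = 0"
  shows "R i = 0"
proof -
  obtain a b c x y z where i: "i = (a, b, c, x, y, z)" by (cases i) auto
  show ?thesis
  proof (cases "(a, x) \<in> io_pairs m n \<and> (b, y) \<in> io_pairs m n \<and> (c, z) \<in> io_pairs m n")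
    case True
    have all_coords: "coord n k R = 0" if "k \<in> io_pairs m n \<times> io_pairs m n \<times> io_pairs m n" for k
      using free coord_eq_0_if_not_free[OF R \<open>m \<ge> 1\<close> that] by blast
    show ?thesis
      unfolding i by (rule coords_eq_0_imp[where m = m, OF all_coords]) (use True in blast)+
  next
    case False
    moreover have "\<forall>a b c x y z. \<not> (a \<in> {1..n} \<and> b \<in> {1..n} \<and> c \<in> {1..n} \<and>
        x \<in> {1..m} \<and> y \<in> {1..m} \<and> z \<in> {1..m}) \<longrightarrow> R (a, b, c, x, y, z) = 0"
      using R by (simp add: RC3_lin_def)
    ultimately show ?thesis unfolding i by blast
  qed
qed

section \<open>The dimension\<close>

lemma RC3_aff_independent_length_le:
  assumes "m \<ge> 1" and ps: "set ps \<subseteq> RC3 m n" and "aff_independent ps"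
  shows "length ps \<le> Suc (card (free_coords m n))"
proof (rule aff_independent_length_le[where coord = "coord n", OF \<open>aff_independent ps\<close> finite_free_coords])
  fix l :: "nat \<Rightarrow> real"
  assume sum_l: "(\<Sum>j<length ps. l j) = 0"
    and coords: "\<forall>k\<in>free_coords m n. (\<Sum>j<length ps. l j * coord n k (ps ! j)) = 0"
  let ?R = "\<lambda>i. \<Sum>j<length ps. l j * (ps ! j) i"
  have "?R \<in> RC3_lin m n" using ps sum_l by (rule lincomb_in_RC3_lin)
  moreover have "\<forall>k\<in>free_coords m n. coord n k ?R = 0"
    using coords by (simp add: coord_sum coord_scale)
  ultimately show "\<forall>i. ?R i = 0" using RC3_lin_eq_0 \<open>m \<ge> 1\<close> by blast
qed

lemma RC3_aff_independent_exists:
  assumes "m \<ge> 1" "n \<ge> 1"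
  shows "\<exists>ps. length ps = Suc (card (free_coords m n)) \<and> set ps \<subseteq> RC3 m n \<and> aff_independent ps"
proof -
  obtain ks where ks: "distinct ks" "set ks = free_coords m n"
    using finite_distinct_list[OF finite_free_coords] by blast
  define ws where "ws = map (basis m n) ks"
  define ps where "ps = map (\<lambda>V i. uniform m n i + V i / real n ^ 3) ((\<lambda>_. 0) # ws)"
  have "length ps = Suc (card (free_coords m n))"
    using distinct_card[OF ks(1)] ks(2) by (simp add: ps_def ws_def)
  moreover have "set ps \<subseteq> RC3 m n"
  proof -
    have "V \<in> RC3_lin m n \<and> (\<forall>i. \<bar>V i\<bar> \<le> 1)" if "V \<in> set ((\<lambda>_. 0) # ws)" for V
    proof -
      from that consider "V = (\<lambda>_. 0)" | k where "k \<in> free_coords m n" "V = basis m n k"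
        using ks(2) unfolding ws_def by auto
      then show ?thesis
        using zero_in_RC3_lin basis_in_RC3_lin[OF assms] abs_basis_le_1 by cases simp_all
    qed
    then show ?thesis
      unfolding ps_def set_map by (blast intro: perturbed_uniform_in_RC3[OF assms(2)])
  qed
  moreover have "aff_independent ((\<lambda>_. 0) # ws)"
  proof (rule aff_independent_zero_Cons)
    fix c :: "nat \<Rightarrow> real"
    assume "\<forall>i. (\<Sum>k<length ws. c k * (ws ! k) i) = 0"
    then have "\<forall>i. (\<Sum>k<length ks. c k * basis m n (ks ! k) i) = 0" by (simp add: ws_def)
    with ks free_coords_subset[OF assms] show "\<forall>k<length ws. c k = 0"
      using basis_lin_independent[where m = m and n = n] by (simp add: ws_def)
  qed
  then have "aff_independent ps"
    unfolding ps_def using assms by (intro aff_independent_map_affine) auto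
  ultimately show ?thesis by blast
qed

lemma affine_dimension_RC3:
  assumes "m \<ge> 1" "n \<ge> 1"
  shows "affine_dimension (RC3 m n) = int (card (free_coords m n))"
proof -
  obtain ps where ps: "length ps = Suc (card (free_coords m n))" "set ps \<subseteq> RC3 m n" "aff_independent ps"
    using RC3_aff_independent_exists[OF assms] by blast
  then have "RC3 m n \<noteq> {}" by (cases ps) auto
  moreover have "(GREATEST k. \<exists>ps. length ps = Suc k \<and> set ps \<subseteq> RC3 m n \<and> aff_independent ps)
      = card (free_coords m n)"
  proof (rule Greatest_equality)
    fix k assume "\<exists>ps. length ps = Suc k \<and> set ps \<subseteq> RC3 m n \<and> aff_independent ps"
    then show "k \<le> card (free_coords m n)" using RC3_aff_independent_length_le[OF assms(1)] by fastforce
  qed (use ps in blast)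
  ultimately show ?thesis by (simp add: affine_dimension_def)
qed

theorem mainTheorem2:
  fixes m n :: nat
  assumes "m \<ge> 2" and "n \<ge> 2"
  shows "affine_dimension (RC3 m n) =
           (int m * (int n - 1) + 1) ^ 3 + int m ^ 2 * (int m - 1) * (int n - 1) ^ 2 - 1"
proof -
  have "m \<ge> 1" "n \<ge> 1" using assms by auto
  then show ?thesis by (simp add: affine_dimension_RC3 int_card_free_coords)
qed

end
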